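(* Let $G$ be a real $n\times m$ matrix and $\mathbf v\in\mathbb R^n$, and let $\mathcal G=\{x\in\mathbb R^m: Gx\le \mathbf v\}$ (componentwise). Let $P$ be the nonnegative orthant of $\mathbb R^n$ and $F=\mathcal R(G)$. Write $\mathbf v=\mathbf v_F+\upsilon$, where $\mathbf v_F$ is the orthogonal projection of $\mathbf v$ onto $F$ and $\upsilon$ is the orthogonal projection of $\mathbf v$ onto $F^\perp$. Assume $\upsilon\neq0$, $F\cap P=\{0\}$, and $\mathcal G\neq\emptyset$. Let $C_e=\{t\upsilon+z:t\ge0,\ z\in F\}$ and $P_c=(\mathbf v+F)\cap P$. Then $$\mathrm{Co}(P_c)=C_e\cap P,$$ where $\mathrm{Co}(S)$ denotes the convex cone generated by the set $S$, i.e. the set of all finite nonnegative linear combinations of elements of $S$.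
   Context: $P_c$ is called the contact polytope. Note that $\mathbf v+F=\upsilon+F$. *)

theory Defs
  imports "HOL-Analysis.Analysis"
begin

end

theory Submission
  imports Defs
begin

text \<open>
  Points of the slice \<open>(v + F) \<inter> P\<close> have the form \<open>\<upsilon> + z\<close> with \<open>z \<in> F\<close>, so they lie in the
  convex cone \<open>C\<^sub>e \<inter> P\<close>, and hence so does their conic hull. Conversely, take \<open>t \<upsilon> + z \<in> P\<close>
  with \<open>t \<ge> 0\<close> and \<open>z \<in> F\<close>. If \<open>t = 0\<close> the point lies in \<open>F \<inter> P = {0}\<close>; otherwise dividing
  by \<open>t\<close> gives a point of the slice. Only this, and not the orthogonality of \<open>\<upsilon>\<close> to \<open>F\<close>,
  \<open>\<upsilon> \<noteq> 0\<close> or the nonemptiness of \<open>\<G>\<close>, is needed.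
\<close>

lemma convex_cone_Int: "convex_cone S \<Longrightarrow> convex_cone T \<Longrightarrow> convex_cone (S \<inter> T)"
  using convex_cone_Inter[of "{S, T}"] by auto

lemma convex_cone_nonneg_orthant: "convex_cone {y :: real ^ 'n. \<forall>i. 0 \<le> y $ i}"
  by (simp add: convex_cone_iff)

lemma convex_cone_ray_plus_subspace:
  assumes "subspace F"
  shows "convex_cone {t *\<^sub>R u + z | t z. t \<ge> 0 \<and> z \<in> F}"
  unfolding convex_cone_iff
proof (intro conjI ballI allI impI)
  show "0 \<in> {t *\<^sub>R u + z | t z. t \<ge> 0 \<and> z \<in> F}"
    using subspace_0[OF assms] by force
next
  fix x y assume "x \<in> {t *\<^sub>R u + z | t z. t \<ge> 0 \<and> z \<in> F}"
    and "y \<in> {t *\<^sub>R u + z | t z. t \<ge> 0 \<and> z \<in> F}"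
  then obtain t z s w where "x = t *\<^sub>R u + z" "t \<ge> 0" "z \<in> F"
      and "y = s *\<^sub>R u + w" "s \<ge> 0" "w \<in> F"
    by blast
  moreover have "x + y = (t + s) *\<^sub>R u + (z + w)"
    using calculation by (simp add: algebra_simps)
  ultimately show "x + y \<in> {t *\<^sub>R u + z | t z. t \<ge> 0 \<and> z \<in> F}"
    using subspace_add[OF assms] by fastforce
next
  fix x and c :: real
  assume "x \<in> {t *\<^sub>R u + z | t z. t \<ge> 0 \<and> z \<in> F}" and "0 \<le> c"
  then obtain t z where "x = t *\<^sub>R u + z" "t \<ge> 0" "z \<in> F"
    by blast
  moreover have "c *\<^sub>R x = (c * t) *\<^sub>R u + c *\<^sub>R z"
    using calculation by (simp add: algebra_simps)
  ultimately show "c *\<^sub>R x \<in> {t *\<^sub>R u + z | t z. t \<ge> 0 \<and> z \<in> F}"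
    using \<open>0 \<le> c\<close> subspace_scale[OF assms] by fastforce
qed

lemma convex_cone_hull_affine_slice:
  fixes F P :: "'a :: real_vector set"
  assumes F: "subspace F" and vF: "vF \<in> F"
    and P: "convex_cone P" and FP: "F \<inter> P = {0}"
  shows "convex_cone hull (((+) (vF + u)) ` F \<inter> P)
           = {t *\<^sub>R u + z | t z. t \<ge> 0 \<and> z \<in> F} \<inter> P"
    (is "convex_cone hull ?S = ?C \<inter> P")
proof
  have "?S \<subseteq> ?C \<inter> P"
  proof
    fix y assume "y \<in> ?S"
    then obtain z where z: "z \<in> F" "y = vF + u + z" "y \<in> P"
      by blast
    have "y = 1 *\<^sub>R u + (vF + z)"
      using z(2) by simp
    moreover have "vF + z \<in> F"
      using subspace_add[OF F vF z(1)] .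
    ultimately show "y \<in> ?C \<inter> P"
      using z(3) zero_le_one by blast
  qed
  then show "convex_cone hull ?S \<subseteq> ?C \<inter> P"
    by (rule hull_minimal) (intro convex_cone_Int convex_cone_ray_plus_subspace F P)
next
  show "?C \<inter> P \<subseteq> convex_cone hull ?S"
  proof
    fix y assume y: "y \<in> ?C \<inter> P"
    then obtain t z where y_eq: "y = t *\<^sub>R u + z" and "t \<ge> 0" "z \<in> F"
      by blast
    consider "t = 0" | "t > 0"
      using \<open>t \<ge> 0\<close> by linarith
    then show "y \<in> convex_cone hull ?S"
    proof cases
      case 1
      then have "y \<in> F \<inter> P"
        using y y_eq \<open>z \<in> F\<close> by simp
      then show ?thesis
        using FP convex_cone_hull_contains_0 by auto
    next
      case 2
      have "(1 / t) *\<^sub>R y = vF + u + ((1 / t) *\<^sub>R z - vF)"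
        using 2 y_eq by (simp add: algebra_simps)
      moreover have "(1 / t) *\<^sub>R z - vF \<in> F"
        using subspace_diff[OF F subspace_scale[OF F \<open>z \<in> F\<close>] vF] .
      moreover have "(1 / t) *\<^sub>R y \<in> P"
        using y 2 by (intro convex_cone_scaleR[OF P]) auto
      ultimately have "(1 / t) *\<^sub>R y \<in> ?S"
        by blast
      then have "t *\<^sub>R ((1 / t) *\<^sub>R y) \<in> convex_cone hull ?S"
        using 2 by (intro convex_cone_hull_mul hull_inc) auto
      then show ?thesis
        using 2 by simp
    qed
  qed
qed

theorem mainTheorem2:
  fixes G :: "real ^ 'm ^ 'n" and v vF \<upsilon> :: "real ^ 'n"
  defines "F \<equiv> range (\<lambda>x. G *v x)"
    and "P \<equiv> {y :: real ^ 'n. \<forall>i. 0 \<le> y $ i}"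
    and "GG \<equiv> {x :: real ^ 'm. \<forall>i. (G *v x) $ i \<le> v $ i}"
    and "Ce \<equiv> {t *\<^sub>R \<upsilon> + z | t z. t \<ge> 0 \<and> z \<in> range (\<lambda>x. G *v x)}"
    and "Pc \<equiv> ((\<lambda>z. v + z) ` range (\<lambda>x. G *v x)) \<inter> {y :: real ^ 'n. \<forall>i. 0 \<le> y $ i}"
  assumes vF_in: "vF \<in> F"
    and ups_orth: "\<forall>z\<in>F. orthogonal \<upsilon> z"
    and decomp: "v = vF + \<upsilon>"
    and ups_nz: "\<upsilon> \<noteq> 0"
    and FP: "F \<inter> P = {0}"
    and GG_ne: "GG \<noteq> {}"
  shows "convex_cone hull Pc = Ce \<inter> P"
proof -
  have "subspace F"
    unfolding F_def by (rule linear_subspace_image[OF matrix_vector_mul_linear subspace_UNIV])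
  from convex_cone_hull_affine_slice[OF this vF_in _ FP, of \<upsilon>]
  show ?thesis
    unfolding Pc_def Ce_def P_def F_def decomp
    using convex_cone_nonneg_orthant by (simp add: P_def)
qed

end
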